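(* Let $\tau$ be a distributive triangle function on $\Delta^+$, $\Sigma$ a ring of subsets of $\Omega\ne\emptyset$, $\gamma$ a $\tau$-decomposable measure on $\Sigma$, and $E\in\Sigma$ with $\gamma_E=\varepsilon_0$. Then $\int_E f\,d\gamma=\varepsilon_0$ for every measurable $f:\Omega\to[0,+\infty]$ that is $\gamma$-integrable on $E$ (in particular for every simple function).
   Context: $\Delta^+$: functions $F:[-\infty,+\infty]\to[0,1]$ non-decreasing, left-continuous on $\mathbb{R}$, $F(x)=0$ for $x\le0$, $F(+\infty)=1$, ordered pointwise; $\varepsilon_0(x)=1$ if $x>0$, else $0$. Triangle function: symmetric, associative $\tau:\Delta^+\times\Delta^+\to\Delta^+$, non-decreasing in each variable, identity $\varepsilon_0$; $G\oplus H=\tau(G,H)$, $\bigoplus_{k=1}^nG_k=\tau(G_1,\bigoplus_{k=2}^nG_k)$. $c\odot G=\varepsilon_0$ if $c=0$, $(c\odot G)(x)=G(x/c)$ if $c>0$; $\tau$ distributive if $c\odot(G\oplus H)=(c\odot G)\oplus(c\odot H)$ for all $c\ge0$. $\tau$-decomposable measure: $\gamma:\Sigma\to\Delta^+$, $\gamma_\emptyset=\varepsilon_0$, $\gamma_{A\cup B}=\tau(\gamma_A,\gamma_B)$ for disjoint $A,B\in\Sigma$. Simple function $\sum_{i=1}^nx_i\chi_{E_i}$ ($x_i\in[0,\infty)$, $E_i\in\Sigma$ pairwise disjoint), $\int_Ef\,d\gamma=\bigoplus_ix_i\odot\gamma_{E\cap E_i}$. Measurable: pointwise limit of simple functions. $\mathcal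 S_{f,E}$: simple $\mathfrak f\le f$ on $E$. $f$ is $\gamma$-integrable on $E$ if some $H\in\Delta^+$ satisfies $\int_E\mathfrak f\,d\gamma\ge H$ for all $\mathfrak f\in\mathcal S_{f,E}$; then $\int_Ef\,d\gamma=\inf\{\int_E\mathfrak f\,d\gamma:\mathfrak f\in\mathcal S_{f,E}\}$ in $(\Delta^+,\le)$. *)

theory Defs
  imports "HOL-Analysis.Analysis"
begin

type_synonym dfun = "ereal \<Rightarrow> real"

definition Delta_plus :: "dfun set" where
  "Delta_plus = {F. mono F \<and> (\<forall>x. 0 \<le> F x \<and> F x \<le> 1)
      \<and> (\<forall>x::real. ((\<lambda>t. F (ereal t)) \<longlongrightarrow> F (ereal x)) (at_left x))
      \<and> (\<forall>x. x \<le> 0 \<longrightarrow> F x = 0) \<and> F \<infinity> = 1}"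

definition eps0 :: dfun where
  "eps0 x = (if x > 0 then 1 else 0)"

definition triangle_function :: "(dfun \<Rightarrow> dfun \<Rightarrow> dfun) \<Rightarrow> bool" where
  "triangle_function \<tau> \<longleftrightarrow>
     (\<forall>G\<in>Delta_plus. \<forall>H\<in>Delta_plus. \<tau> G H \<in> Delta_plus)
   \<and> (\<forall>G\<in>Delta_plus. \<forall>H\<in>Delta_plus. \<tau> G H = \<tau> H G)
   \<and> (\<forall>G\<in>Delta_plus. \<forall>H\<in>Delta_plus. \<forall>K\<in>Delta_plus. \<tau> G (\<tau> H K) = \<tau> (\<tau> G H) K)
   \<and> (\<forall>G\<in>Delta_plus. \<forall>G'\<in>Delta_plus. \<forall>H\<in>Delta_plus. G \<le> G' \<longrightarrow> \<tau> G H \<le> \<tau> G' H)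
   \<and> (\<forall>G\<in>Delta_plus. \<tau> G eps0 = G)"

definition smult :: "real \<Rightarrow> dfun \<Rightarrow> dfun" where
  "smult c G = (if c = 0 then eps0 else (\<lambda>x. G (x / ereal c)))"

definition distributive :: "(dfun \<Rightarrow> dfun \<Rightarrow> dfun) \<Rightarrow> bool" where
  "distributive \<tau> \<longleftrightarrow> (\<forall>c\<ge>0. \<forall>G\<in>Delta_plus. \<forall>H\<in>Delta_plus.
      smult c (\<tau> G H) = \<tau> (smult c G) (smult c H))"

definition decomposable_measure ::
  "(dfun \<Rightarrow> dfun \<Rightarrow> dfun) \<Rightarrow> 'a set set \<Rightarrow> ('a set \<Rightarrow> dfun) \<Rightarrow> bool" where
  "decomposable_measure \<tau> \<Sigma> \<gamma> \<longleftrightarrow>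
     (\<forall>A\<in>\<Sigma>. \<gamma> A \<in> Delta_plus) \<and> \<gamma> {} = eps0
   \<and> (\<forall>A\<in>\<Sigma>. \<forall>B\<in>\<Sigma>. A \<inter> B = {} \<longrightarrow> \<gamma> (A \<union> B) = \<tau> (\<gamma> A) (\<gamma> B))"

definition simple_rep :: "'a set set \<Rightarrow> (real \<times> 'a set) list \<Rightarrow> bool" where
  "simple_rep \<Sigma> xs \<longleftrightarrow> (\<forall>(x, A) \<in> set xs. 0 \<le> x \<and> A \<in> \<Sigma>)
     \<and> disjoint_family_on (\<lambda>i. snd (xs ! i)) {..<length xs}"

definition simple_fun :: "(real \<times> 'a set) list \<Rightarrow> 'a \<Rightarrow> real" where
  "simple_fun xs \<omega> = (\<Sum>(x, A) \<leftarrow> xs. x * indicator A \<omega>)"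

definition simple_integral ::
  "(dfun \<Rightarrow> dfun \<Rightarrow> dfun) \<Rightarrow> ('a set \<Rightarrow> dfun) \<Rightarrow> 'a set \<Rightarrow> (real \<times> 'a set) list \<Rightarrow> dfun" where
  "simple_integral \<tau> \<gamma> E xs = foldr (\<lambda>(x, A) acc. \<tau> (smult x (\<gamma> (E \<inter> A))) acc) xs eps0"

definition measurable_fun :: "'a set set \<Rightarrow> 'a set \<Rightarrow> ('a \<Rightarrow> ereal) \<Rightarrow> bool" where
  "measurable_fun \<Sigma> \<Omega> f \<longleftrightarrow> (\<exists>s. (\<forall>n. simple_rep \<Sigma> (s n))
      \<and> (\<forall>\<omega>\<in>\<Omega>. (\<lambda>n. ereal (simple_fun (s n) \<omega>)) \<longlonglongrightarrow> f \<omega>))"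

definition simple_below :: "'a set set \<Rightarrow> ('a \<Rightarrow> ereal) \<Rightarrow> 'a set \<Rightarrow> (real \<times> 'a set) list set" where
  "simple_below \<Sigma> f E = {xs. simple_rep \<Sigma> xs \<and> (\<forall>\<omega>\<in>E. ereal (simple_fun xs \<omega>) \<le> f \<omega>)}"

definition gamma_integrable ::
  "(dfun \<Rightarrow> dfun \<Rightarrow> dfun) \<Rightarrow> 'a set set \<Rightarrow> ('a set \<Rightarrow> dfun) \<Rightarrow> ('a \<Rightarrow> ereal) \<Rightarrow> 'a set \<Rightarrow> bool" where
  "gamma_integrable \<tau> \<Sigma> \<gamma> f E \<longleftrightarrow>
     (\<exists>H\<in>Delta_plus. \<forall>xs\<in>simple_below \<Sigma> f E. H \<le> simple_integral \<tau> \<gamma> E xs)"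

definition gamma_integral ::
  "(dfun \<Rightarrow> dfun \<Rightarrow> dfun) \<Rightarrow> 'a set set \<Rightarrow> ('a set \<Rightarrow> dfun) \<Rightarrow> ('a \<Rightarrow> ereal) \<Rightarrow> 'a set \<Rightarrow> dfun" where
  "gamma_integral \<tau> \<Sigma> \<gamma> f E = (THE G. G \<in> Delta_plus
      \<and> (\<forall>xs\<in>simple_below \<Sigma> f E. G \<le> simple_integral \<tau> \<gamma> E xs)
      \<and> (\<forall>H\<in>Delta_plus. (\<forall>xs\<in>simple_below \<Sigma> f E. H \<le> simple_integral \<tau> \<gamma> E xs) \<longrightarrow> H \<le> G))"

end

theory Submission
  imports Defs
begin

text \<open>Every element of \<open>\<Delta>\<^sup>+\<close> lies below \<open>\<epsilon>\<^sub>0\<close>, so \<open>\<tau> G H \<le> \<tau> G \<epsilon>\<^sub>0 = G\<close>: a decomposable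
  measure can only decrease on larger sets. Hence \<open>\<gamma>\<^sub>E = \<epsilon>\<^sub>0\<close> forces \<open>\<gamma>\<^sub>E\<^sub>\<inter>\<^sub>A = \<epsilon>\<^sub>0\<close> for every
  \<open>A \<in> \<Sigma>\<close>, every simple integral over \<open>E\<close> collapses to \<open>\<epsilon>\<^sub>0\<close>, and so does their infimum.\<close>

lemma Delta_plus_le_eps0: "F \<in> Delta_plus \<Longrightarrow> F \<le> eps0"
  unfolding le_fun_def Delta_plus_def eps0_def by (auto simp: not_less)

lemma eps0_in_Delta_plus: "eps0 \<in> Delta_plus"
proof -
  have "((\<lambda>t. eps0 (ereal t)) \<longlongrightarrow> eps0 (ereal x)) (at_left x)" for x :: real
  proof (cases "x > 0")
    case True
    have "eventually (\<lambda>t. eps0 (ereal t) = 1) (at_left x)"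
      using eventually_at_left_real[OF True] by eventually_elim (simp add: eps0_def)
    then show ?thesis
      using True by (simp add: eps0_def tendsto_eventually)
  next
    case False
    have "x - 1 < x" by simp
    from eventually_at_left_real[OF this]
    have "eventually (\<lambda>t. eps0 (ereal t) = 0) (at_left x)"
      by eventually_elim (use False in \<open>simp add: eps0_def\<close>)
    then show ?thesis
      using False by (simp add: eps0_def tendsto_eventually)
  qed
  moreover have "mono eps0"
    by (auto simp: mono_def eps0_def)
  moreover have "\<forall>x. 0 \<le> eps0 x \<and> eps0 x \<le> 1" "\<forall>x. x \<le> 0 \<longrightarrow> eps0 x = 0" "eps0 \<infinity> = 1"
    by (simp_all add: eps0_def not_le)
  ultimately show ?thesis
    unfolding Delta_plus_def by blast
qed

lemma smult_eps0: "c \<ge> 0 \<Longrightarrow> smult c eps0 = eps0"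
proof (cases "c = 0")
  case False
  assume "c \<ge> 0"
  then have "c > 0" using False by simp
  then have "(t / ereal c > 0) = (t > 0)" for t :: ereal
    by (cases t) (simp_all add: zero_less_divide_iff)
  then show ?thesis
    using False unfolding smult_def eps0_def fun_eq_iff by simp
qed (simp add: smult_def)

lemma triangle_function_le_left:
  assumes "triangle_function \<tau>" and "G \<in> Delta_plus" and "H \<in> Delta_plus"
  shows "\<tau> G H \<le> G"
proof -
  have "\<tau> G H = \<tau> H G"
    using assms unfolding triangle_function_def by blast
  also have "\<dots> \<le> \<tau> eps0 G"
    using assms Delta_plus_le_eps0 eps0_in_Delta_plus unfolding triangle_function_def by blast
  also have "\<dots> = G"
    using assms eps0_in_Delta_plus unfolding triangle_function_def by metis
  finally show ?thesis .
qed

lemma decomposable_measure_inter_eps0: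
  assumes "triangle_function \<tau>" and "ring_of_sets \<Omega> \<Sigma>"
    and "decomposable_measure \<tau> \<Sigma> \<gamma>"
    and "E \<in> \<Sigma>" and "\<gamma> E = eps0" and "A \<in> \<Sigma>"
  shows "\<gamma> (E \<inter> A) = eps0"
proof -
  interpret ring_of_sets \<Omega> \<Sigma> by fact
  have sets: "E \<inter> A \<in> \<Sigma>" "E - A \<in> \<Sigma>"
    using Int[OF assms(4,6)] Diff[OF assms(4,6)] by blast+
  have in_Delta: "\<gamma> B \<in> Delta_plus" if "B \<in> \<Sigma>" for B
    using assms(3) that unfolding decomposable_measure_def by blast
  have additive: "\<gamma> (B \<union> C) = \<tau> (\<gamma> B) (\<gamma> C)" if "B \<in> \<Sigma>" "C \<in> \<Sigma>" "B \<inter> C = {}" for B C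
    using assms(3) that unfolding decomposable_measure_def by blast
  have "\<gamma> E = \<gamma> ((E \<inter> A) \<union> (E - A))"
    by (simp only: Int_Diff_Un)
  also have "\<dots> = \<tau> (\<gamma> (E \<inter> A)) (\<gamma> (E - A))"
    by (rule additive[OF sets Int_Diff_disjoint])
  also have "\<dots> \<le> \<gamma> (E \<inter> A)"
    by (rule triangle_function_le_left[OF assms(1) in_Delta in_Delta]) (fact sets)+
  finally have "eps0 \<le> \<gamma> (E \<inter> A)"
    unfolding assms(5) .
  with Delta_plus_le_eps0[OF in_Delta[OF sets(1)]] show ?thesis
    by (rule order_antisym)
qed

lemma simple_integral_eq_eps0:
  assumes "triangle_function \<tau>" and "simple_rep \<Sigma> xs"
    and "\<And>A. A \<in> \<Sigma> \<Longrightarrow> \<gamma> (E \<inter> A) = eps0"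
  shows "simple_integral \<tau> \<gamma> E xs = eps0"
proof -
  have "\<forall>(x, A) \<in> set xs. 0 \<le> x \<and> A \<in> \<Sigma>"
    using assms(2) unfolding simple_rep_def by blast
  then show ?thesis
    unfolding simple_integral_def
  proof (induction xs)
    case (Cons p xs)
    obtain x A where p: "p = (x, A)" by force
    then have "0 \<le> x" "A \<in> \<Sigma>"
      using Cons.prems by auto
    then have "smult x (\<gamma> (E \<inter> A)) = eps0"
      using assms(3) smult_eps0 by simp
    moreover have "\<tau> eps0 eps0 = eps0"
      using assms(1) eps0_in_Delta_plus unfolding triangle_function_def by blast
    ultimately show ?case
      using Cons p by simp
  qed simp
qed

lemma gamma_integral_eq_eps0:
  assumes "\<And>xs. xs \<in> simple_below \<Sigma> f E \<Longrightarrow> simple_integral \<tau> \<gamma> E xs = eps0"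
  shows "gamma_integral \<tau> \<Sigma> \<gamma> f E = eps0"
  unfolding gamma_integral_def
proof (rule the_equality)
  fix G
  assume "G \<in> Delta_plus \<and> (\<forall>xs\<in>simple_below \<Sigma> f E. G \<le> simple_integral \<tau> \<gamma> E xs)
      \<and> (\<forall>H\<in>Delta_plus. (\<forall>xs\<in>simple_below \<Sigma> f E. H \<le> simple_integral \<tau> \<gamma> E xs) \<longrightarrow> H \<le> G)"
  then show "G = eps0"
    using assms eps0_in_Delta_plus Delta_plus_le_eps0 by (simp add: order_antisym)
qed (use assms eps0_in_Delta_plus Delta_plus_le_eps0 in simp)

theorem theorem4p12:
  fixes \<tau> :: "dfun \<Rightarrow> dfun \<Rightarrow> dfun" and \<Omega> :: "'a set" and \<Sigma> :: "'a set set"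
    and \<gamma> :: "'a set \<Rightarrow> dfun" and E :: "'a set"
  assumes "triangle_function \<tau>" and "distributive \<tau>"
    and "ring_of_sets \<Omega> \<Sigma>" and "\<Omega> \<noteq> {}"
    and "decomposable_measure \<tau> \<Sigma> \<gamma>"
    and "E \<in> \<Sigma>" and "\<gamma> E = eps0"
  shows "(\<forall>f :: 'a \<Rightarrow> ereal. (\<forall>\<omega>\<in>\<Omega>. 0 \<le> f \<omega>) \<and> measurable_fun \<Sigma> \<Omega> f
             \<and> gamma_integrable \<tau> \<Sigma> \<gamma> f E \<longrightarrow> gamma_integral \<tau> \<Sigma> \<gamma> f E = eps0)
       \<and> (\<forall>xs. simple_rep \<Sigma> xs \<longrightarrow> simple_integral \<tau> \<gamma> E xs = eps0)"
proof -
  have null: "\<gamma> (E \<inter> A) = eps0" if "A \<in> \<Sigma>" for A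
    using decomposable_measure_inter_eps0[OF assms(1,3,5,6,7) that] .
  have simple: "simple_integral \<tau> \<gamma> E xs = eps0" if "simple_rep \<Sigma> xs" for xs
    using simple_integral_eq_eps0[OF assms(1) that] null by blast
  have "gamma_integral \<tau> \<Sigma> \<gamma> f E = eps0" for f
    by (rule gamma_integral_eq_eps0) (simp add: simple simple_below_def)
  with simple show ?thesis by blast
qed

end
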